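(* Consider a gossip network consisting of a source node $s$ and end-nodes $\mathcal{N}=\{1,\dots,n\}$, with the dynamics described in the context. For a nonempty subset $S\subseteq\mathcal{N}$, let $F_S(t)=\max_{j\in S}F_j(t)$ and $F_S=\lim_{t\to\infty}\mathbb{E}[F_S(t)]$. Then for every nonempty $S\subseteq \mathcal{N}$, $$F_S=\frac{\lambda_s(S)+\sum_{i\in N(S)}\lambda_i(S)\,F_{S\cup\{i\}}}{\lambda_e+\lambda_s(S)+\sum_{i\in N(S)}\lambda_i(S)}.$$
   Context: Model: The information at the source is updated (a new version is generated) according to a Poisson process of rate $\lambda_e>0$. The source sends its current version to end-node $j\in\mathcal{N}$ according to a Poisson process of rate $\lambda_{sj}\ge 0$, and end-node $i$ sends its currently stored version to end-node $j\neq i$ according to a Poisson process of rate $\lambda_{ij}\ge 0$; all these processes are independent. When a node receives a version, it keeps the fresher of its stored version and the received one. The binary freshness of end-node $k$ at time $t$ is $F_k(t)=1$ if node $k$ stores the current version of the source, and $F_k(t)=0$ otherwise. Thus: when the source generates a new version, all $F_k$ become $0$; when the source updates node $j$, $F_j$ becomes $1$; when node $i$ updates node $j$, $F_j$ becomes $\max(F_i,F_j)$. Notation: for $S\subseteq\mathcal{N}$, $\lambda_s(S)=\sum_{j\in S}\lambda_{sj}$ is the total update rate from the source into $S$; for $i\notin S$, $\lambda_i(S)=\sum_{j\in S}\lambda_{ij}$ is the total update rate from node $i$ into $S$; $N(S)=\{i\in\mathcal{N}\setminus S:\lambda_i(S)>0\}$ is the set of updating neighbors of $S$. *)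

theory Defs
  imports "HOL-Analysis.Analysis"
begin

text \<open>End-nodes are 1..n. A state of the network is the set A of end-nodes
  that currently store the current version (F_k = 1 iff k in A).
  le = lambda_e, ls j = lambda_{sj}, l i j = lambda_{ij}.\<close>

definition nodes :: "nat \<Rightarrow> nat set" where
  "nodes n = {1..n}"

text \<open>Sum of the rates of all elementary events (Poisson clocks) that move state A
  to state B (self-loops included, they cancel in the forward equation).\<close>
definition event_rate ::
  "nat \<Rightarrow> real \<Rightarrow> (nat \<Rightarrow> real) \<Rightarrow> (nat \<Rightarrow> nat \<Rightarrow> real) \<Rightarrow> nat set \<Rightarrow> nat set \<Rightarrow> real" where
  "event_rate n le ls l A B =
     (if B = {} then le else 0)
   + (\<Sum>j\<in>nodes n. if B = insert j A then ls j else 0)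
   + (\<Sum>i\<in>nodes n. \<Sum>j\<in>nodes n - {i}.
        if B = (if i \<in> A then insert j A else A) then l i j else 0)"

definition total_rate ::
  "nat \<Rightarrow> real \<Rightarrow> (nat \<Rightarrow> real) \<Rightarrow> (nat \<Rightarrow> nat \<Rightarrow> real) \<Rightarrow> real" where
  "total_rate n le ls l =
     le + (\<Sum>j\<in>nodes n. ls j) + (\<Sum>i\<in>nodes n. \<Sum>j\<in>nodes n - {i}. l i j)"

text \<open>p t A = probability that the state at time t is A; it satisfies the
  Kolmogorov forward equation of the continuous-time Markov chain.\<close>
definition forward_eq ::
  "nat \<Rightarrow> real \<Rightarrow> (nat \<Rightarrow> real) \<Rightarrow> (nat \<Rightarrow> nat \<Rightarrow> real) \<Rightarrow> (real \<Rightarrow> nat set \<Rightarrow> real) \<Rightarrow> bool" where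
  "forward_eq n le ls l p \<longleftrightarrow>
     (\<forall>B\<in>Pow (nodes n). \<forall>t\<ge>0.
        ((\<lambda>u. p u B) has_real_derivative
           ((\<Sum>A\<in>Pow (nodes n). p t A * event_rate n le ls l A B)
            - p t B * total_rate n le ls l)) (at t within {0..}))"

definition initial_distribution :: "nat \<Rightarrow> (nat set \<Rightarrow> real) \<Rightarrow> bool" where
  "initial_distribution n p0 \<longleftrightarrow>
     (\<forall>A\<in>Pow (nodes n). p0 A \<ge> 0) \<and> (\<Sum>A\<in>Pow (nodes n). p0 A) = 1"

text \<open>E[F_S(t)] = P(some node of S is fresh at time t).\<close>
definition exp_fresh :: "nat \<Rightarrow> (real \<Rightarrow> nat set \<Rightarrow> real) \<Rightarrow> nat set \<Rightarrow> real \<Rightarrow> real" where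
  "exp_fresh n p S t = (\<Sum>A\<in>{A\<in>Pow (nodes n). A \<inter> S \<noteq> {}}. p t A)"

definition lam_s :: "(nat \<Rightarrow> real) \<Rightarrow> nat set \<Rightarrow> real" where
  "lam_s ls S = (\<Sum>j\<in>S. ls j)"

definition lam_i :: "(nat \<Rightarrow> nat \<Rightarrow> real) \<Rightarrow> nat \<Rightarrow> nat set \<Rightarrow> real" where
  "lam_i l i S = (\<Sum>j\<in>S. l i j)"

definition upd_neighbors :: "nat \<Rightarrow> (nat \<Rightarrow> nat \<Rightarrow> real) \<Rightarrow> nat set \<Rightarrow> nat set" where
  "upd_neighbors n l S = {i \<in> nodes n - S. lam_i l i S > 0}"

end

(* Let g_S(t) be the probability that some node of S is fresh at time t. Applying the
   generator of the chain to the indicator of "the state meets S" shows that a reset kills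
   F_S, while a source update into S, or a gossip from a node i outside S into S while i is
   fresh, creates it. Hence the forward equation yields the linear ODE
     g_S' = lam_s(S) + (SUM i ~: S. lam_i(S) g_{S+i}) - a_S g_S,
     a_S = le + lam_s(S) + (SUM i ~: S. lam_i(S)) > 0.
   By downward induction on S (for S = N the sum is empty) every g_S converges, and a linear
   ODE whose forcing converges has the limit forcing / a_S; nodes i with lam_i(S) = 0 drop out
   of both sums. *)

theory Submission
  imports Defs
begin

lemma linear_ode_eventually_less:
  fixes y h :: "real \<Rightarrow> real"
  assumes a: "a > 0" and e: "e > 0"
    and deriv: "\<And>t. t > 0 \<Longrightarrow> (y has_real_derivative (h t - a * y t)) (at t)"
    and lim: "(h \<longlongrightarrow> H) at_top"
  shows "eventually (\<lambda>t. y t < H / a + e) at_top"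
proof -
  obtain T0 where T0: "\<And>t. t \<ge> T0 \<Longrightarrow> \<bar>h t - H\<bar> < a * e / 2"
    using tendstoD[OF lim, of "a * e / 2"] a e
    by (auto simp: eventually_at_top_linorder dist_real_def)
  define T where "T = max T0 1"
  (* Integrating factor: once h stays within a e / 2 of H, \<phi> is nonincreasing. *)
  define \<phi> where "\<phi> t = exp (a * t) * (y t - H / a - e / 2)" for t
  have \<phi>_decreasing: "\<phi> t \<le> \<phi> T" if "t \<ge> T" for t
  proof (rule DERIV_nonpos_imp_nonincreasing[OF that])
    fix x assume x: "T \<le> x" "x \<le> t"
    then have "x > 0" "T0 \<le> x"
      unfolding T_def by auto
    have "(\<phi> has_real_derivative
        (a * exp (a * x) * (y x - H / a - e / 2) + exp (a * x) * (h x - a * y x))) (at x)"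
      unfolding \<phi>_def by (auto intro!: derivative_eq_intros deriv[OF \<open>x > 0\<close>])
    moreover have "a * exp (a * x) * (y x - H / a - e / 2) + exp (a * x) * (h x - a * y x)
        = exp (a * x) * (h x - H - a * e / 2)"
      using a by (simp add: field_simps)
    moreover have "h x - H - a * e / 2 \<le> 0"
      using T0[OF \<open>T0 \<le> x\<close>] by linarith
    ultimately show "\<exists>z. DERIV \<phi> x :> z \<and> z \<le> 0"
      by (metis mult_nonneg_nonpos exp_ge_zero)
  qed
  have "LIM t at_top. a * t :> at_top"
    by (rule filterlim_tendsto_pos_mult_at_top[OF tendsto_const a filterlim_ident])
  then have "((\<lambda>t. exp (- (a * t))) \<longlongrightarrow> 0) at_top"
    by (intro filterlim_compose[OF exp_at_bot]) (simp add: filterlim_uminus_at_top)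
  then have "((\<lambda>t. \<phi> T * exp (- (a * t))) \<longlongrightarrow> 0) at_top"
    by (rule tendsto_mult_right_zero)
  then have "eventually (\<lambda>t. \<phi> T * exp (- (a * t)) < e / 2) at_top"
    by (rule order_tendstoD(2)) (use e in simp)
  moreover have "eventually (\<lambda>t. t \<ge> T) at_top"
    by simp
  ultimately show ?thesis
  proof eventually_elim
    case (elim t)
    have "exp (a * t) * (y t - H / a - e / 2) \<le> \<phi> T"
      using \<phi>_decreasing[OF elim(2)] by (simp add: \<phi>_def)
    then have "y t - H / a - e / 2 \<le> \<phi> T * exp (- (a * t))"
      by (simp add: exp_minus field_simps mult.commute)
    with elim(1) show ?case
      by linarith
  qed
qed

lemma linear_ode_tendsto:
  fixes y h :: "real \<Rightarrow> real"
  assumes a: "a > 0"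
    and deriv: "\<And>t. t > 0 \<Longrightarrow> (y has_real_derivative (h t - a * y t)) (at t)"
    and lim: "(h \<longlongrightarrow> H) at_top"
  shows "(y \<longlongrightarrow> H / a) at_top"
proof (rule tendstoI)
  fix e :: real
  assume e: "e > 0"
  have upper: "eventually (\<lambda>t. y t < H / a + e) at_top"
    using a e deriv lim by (rule linear_ode_eventually_less)
  have "((\<lambda>t. - y t) has_real_derivative (- h t - a * (- y t))) (at t)" if "t > 0" for t
    using DERIV_minus[OF deriv[OF that]] by simp
  from linear_ode_eventually_less[OF a e this tendsto_minus[OF lim]]
  have lower: "eventually (\<lambda>t. - y t < - H / a + e) at_top"
    by simp
  from upper lower show "eventually (\<lambda>t. dist (y t) (H / a) < e) at_top"
    by eventually_elim (auto simp: dist_real_def abs_less_iff)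
qed

lemma finite_nodes [simp]: "finite (nodes n)"
  by (simp add: nodes_def)

definition generator ::
  "nat \<Rightarrow> real \<Rightarrow> (nat \<Rightarrow> real) \<Rightarrow> (nat \<Rightarrow> nat \<Rightarrow> real) \<Rightarrow> (nat set \<Rightarrow> real) \<Rightarrow> nat set \<Rightarrow> real" where
  "generator n le ls l f A =
     le * (f {} - f A)
   + (\<Sum>j\<in>nodes n. ls j * (f (insert j A) - f A))
   + (\<Sum>i\<in>nodes n. \<Sum>j\<in>nodes n - {i}. l i j * (f (if i \<in> A then insert j A else A) - f A))"

lemma sum_event_rate_mult:
  assumes "A \<subseteq> nodes n"
  shows "(\<Sum>B\<in>Pow (nodes n). event_rate n le ls l A B * f B)
       = le * f {} + (\<Sum>j\<in>nodes n. ls j * f (insert j A))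
         + (\<Sum>i\<in>nodes n. \<Sum>j\<in>nodes n - {i}. l i j * f (if i \<in> A then insert j A else A))"
proof -
  have delta: "(if B = C then c else 0) * f B = (if C = B then c * f C else 0)" for B C c
    by simp
  have reset: "(\<Sum>B\<in>Pow (nodes n). (if B = {} then le else 0) * f B) = le * f {}"
    unfolding delta by simp
  have source: "(\<Sum>B\<in>Pow (nodes n). (\<Sum>j\<in>nodes n. if B = insert j A then ls j else 0) * f B)
      = (\<Sum>j\<in>nodes n. ls j * f (insert j A))"
    using assms unfolding sum_distrib_right delta by (subst sum.swap) (simp cong: sum.cong)
  have gossip: "(\<Sum>B\<in>Pow (nodes n). (\<Sum>i\<in>nodes n. \<Sum>j\<in>nodes n - {i}.
        if B = (if i \<in> A then insert j A else A) then l i j else 0) * f B)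
      = (\<Sum>i\<in>nodes n. \<Sum>j\<in>nodes n - {i}. l i j * f (if i \<in> A then insert j A else A))"
    using assms unfolding sum_distrib_right delta
    by (subst sum.swap, intro sum.cong refl, subst sum.swap) (auto intro!: sum.cong split: if_splits)
  show ?thesis
    unfolding event_rate_def distrib_right sum.distrib reset source gossip ..
qed

lemma generator_eq_sum_event_rate:
  assumes "A \<subseteq> nodes n"
  shows "generator n le ls l f A
       = (\<Sum>B\<in>Pow (nodes n). event_rate n le ls l A B * f B) - total_rate n le ls l * f A"
  unfolding sum_event_rate_mult[OF assms] generator_def total_rate_def
  by (simp add: algebra_simps sum_subtractf sum_distrib_left)

definition fresh_in :: "nat set \<Rightarrow> nat set \<Rightarrow> real" where
  "fresh_in S A = of_bool (A \<inter> S \<noteq> {})"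

definition exit_rate :: "nat \<Rightarrow> real \<Rightarrow> (nat \<Rightarrow> real) \<Rightarrow> (nat \<Rightarrow> nat \<Rightarrow> real) \<Rightarrow> nat set \<Rightarrow> real" where
  "exit_rate n le ls l S = le + lam_s ls S + (\<Sum>i\<in>nodes n - S. lam_i l i S)"

lemma generator_const: "generator n le ls l (\<lambda>_. c) A = 0"
  by (simp add: generator_def)

lemma generator_fresh_in:
  assumes S: "S \<subseteq> nodes n"
  shows "generator n le ls l (fresh_in S) A
       = lam_s ls S - exit_rate n le ls l S * fresh_in S A
         + (\<Sum>i\<in>nodes n - S. lam_i l i S * fresh_in (S \<union> {i}) A)"
proof -
  define stale :: real where "stale = of_bool (A \<inter> S = {})"
  have "fresh_in S (insert j A) - fresh_in S A = of_bool (j \<in> S) * stale" for j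
    by (auto simp: fresh_in_def stale_def)
  then have source: "(\<Sum>j\<in>nodes n. ls j * (fresh_in S (insert j A) - fresh_in S A)) = lam_s ls S * stale"
    using S unfolding lam_s_def sum_distrib_right by (intro sum.mono_neutral_cong_right) auto
  have gossip_from: "(\<Sum>j\<in>nodes n - {i}. l i j * (fresh_in S (if i \<in> A then insert j A else A) - fresh_in S A))
      = (if i \<in> S then 0 else lam_i l i S * of_bool (i \<in> A) * stale)" for i
  proof (cases "i \<in> S")
    case False
    have "fresh_in S (if i \<in> A then insert j A else A) - fresh_in S A
        = of_bool (j \<in> S) * (of_bool (i \<in> A) * stale)" for j
      by (auto simp: fresh_in_def stale_def)
    then have "(\<Sum>j\<in>nodes n - {i}. l i j * (fresh_in S (if i \<in> A then insert j A else A) - fresh_in S A))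
        = (\<Sum>j\<in>S. l i j) * (of_bool (i \<in> A) * stale)"
      using False S unfolding sum_distrib_right by (intro sum.mono_neutral_cong_right) auto
    with False show ?thesis
      by (simp add: lam_i_def mult.assoc)
  next
    case True
    then have "fresh_in S (if i \<in> A then insert j A else A) - fresh_in S A = 0" for j
      by (auto simp: fresh_in_def)
    with True show ?thesis
      by simp
  qed
  have gossip: "(\<Sum>i\<in>nodes n. \<Sum>j\<in>nodes n - {i}. l i j * (fresh_in S (if i \<in> A then insert j A else A) - fresh_in S A))
      = (\<Sum>i\<in>nodes n - S. lam_i l i S * (fresh_in (S \<union> {i}) A - fresh_in S A))"
    unfolding gossip_from by (intro sum.mono_neutral_cong_right) (auto simp: fresh_in_def stale_def)
  show ?thesis
    unfolding generator_def source gossip exit_rate_def stale_def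
    by (simp add: algebra_simps sum_subtractf sum_distrib_right fresh_in_def of_bool_def)
qed

lemma exp_fresh_eq_sum_fresh_in:
  "exp_fresh n p S t = (\<Sum>A\<in>Pow (nodes n). p t A * fresh_in S A)"
proof -
  have "exp_fresh n p S t = (\<Sum>A\<in>Pow (nodes n). if A \<inter> S \<noteq> {} then p t A else 0)"
    unfolding exp_fresh_def by (rule sum.inter_filter) simp
  also have "\<dots> = (\<Sum>A\<in>Pow (nodes n). p t A * fresh_in S A)"
    by (intro sum.cong) (auto simp: fresh_in_def)
  finally show ?thesis .
qed

lemma lam_i_nonneg:
  assumes "\<forall>i\<in>nodes n. \<forall>j\<in>nodes n. i \<noteq> j \<longrightarrow> l i j \<ge> 0" and "S \<subseteq> nodes n" and "i \<in> nodes n - S"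
  shows "lam_i l i S \<ge> 0"
proof -
  have "l i j \<ge> 0" if "j \<in> S" for j
    using assms(1)[rule_format, of i j] assms(2,3) that by auto
  then show ?thesis
    unfolding lam_i_def by (rule sum_nonneg)
qed

lemma sum_lam_i_upd_neighbors:
  assumes "\<forall>i\<in>nodes n. \<forall>j\<in>nodes n. i \<noteq> j \<longrightarrow> l i j \<ge> 0" and "S \<subseteq> nodes n"
  shows "(\<Sum>i\<in>nodes n - S. lam_i l i S * g i) = (\<Sum>i\<in>upd_neighbors n l S. lam_i l i S * g i)"
proof (rule sum.mono_neutral_right)
  show "\<forall>i\<in>nodes n - S - upd_neighbors n l S. lam_i l i S * g i = 0"
    using lam_i_nonneg[OF assms] by (force simp: upd_neighbors_def)
qed (auto simp: upd_neighbors_def)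

locale forward_solution =
  fixes n :: nat and le :: real and ls :: "nat \<Rightarrow> real" and l :: "nat \<Rightarrow> nat \<Rightarrow> real"
    and p :: "real \<Rightarrow> nat set \<Rightarrow> real"
  assumes init: "initial_distribution n (p 0)"
    and fwd: "forward_eq n le ls l p"
begin

lemma expectation_has_derivative:
  assumes "t \<ge> 0"
  shows "((\<lambda>u. \<Sum>A\<in>Pow (nodes n). p u A * f A) has_real_derivative
           (\<Sum>A\<in>Pow (nodes n). p t A * generator n le ls l f A)) (at t within {0..})"
proof -
  let ?P = "Pow (nodes n)" and ?q = "event_rate n le ls l" and ?tot = "total_rate n le ls l"
  have "((\<lambda>u. \<Sum>B\<in>?P. p u B * f B) has_real_derivative
      (\<Sum>B\<in>?P. ((\<Sum>A\<in>?P. p t A * ?q A B) - p t B * ?tot) * f B)) (at t within {0..})"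
    using fwd assms unfolding forward_eq_def by (intro DERIV_sum DERIV_cmult_right) auto
  also have "(\<Sum>B\<in>?P. ((\<Sum>A\<in>?P. p t A * ?q A B) - p t B * ?tot) * f B)
      = (\<Sum>A\<in>?P. p t A * ((\<Sum>B\<in>?P. ?q A B * f B) - ?tot * f A))"
    unfolding left_diff_distrib right_diff_distrib sum_subtractf sum_distrib_left sum_distrib_right
    by (subst sum.swap) (simp add: mult.assoc mult.left_commute)
  also have "\<dots> = (\<Sum>A\<in>?P. p t A * generator n le ls l f A)"
    by (intro sum.cong refl) (simp add: generator_eq_sum_event_rate)
  finally show ?thesis .
qed

lemma sum_prob_eq_1:
  assumes "t \<ge> 0"
  shows "(\<Sum>A\<in>Pow (nodes n). p t A) = 1"
proof -
  have "\<exists>c. \<forall>u\<in>{0..}. (\<Sum>A\<in>Pow (nodes n). p u A * 1) = c"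
    using expectation_has_derivative[of _ "\<lambda>_. 1"]
    by (intro has_field_derivative_zero_constant) (auto simp: generator_const)
  then have "(\<Sum>A\<in>Pow (nodes n). p t A) = (\<Sum>A\<in>Pow (nodes n). p 0 A)"
    using assms by auto
  with init show ?thesis
    by (simp add: initial_distribution_def)
qed

lemma exp_fresh_has_derivative:
  assumes S: "S \<subseteq> nodes n" and t: "t > 0"
  shows "(exp_fresh n p S has_real_derivative
           lam_s ls S + (\<Sum>i\<in>nodes n - S. lam_i l i S * exp_fresh n p (S \<union> {i}) t)
           - exit_rate n le ls l S * exp_fresh n p S t) (at t)"
proof -
  have "exp_fresh n p S = (\<lambda>u. \<Sum>A\<in>Pow (nodes n). p u A * fresh_in S A)"
    by (rule ext) (rule exp_fresh_eq_sum_fresh_in)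
  then have "(exp_fresh n p S has_real_derivative
      (\<Sum>A\<in>Pow (nodes n). p t A * generator n le ls l (fresh_in S) A)) (at t within {0<..})"
    using t by (auto intro: DERIV_subset[OF expectation_has_derivative])
  also have "(\<Sum>A\<in>Pow (nodes n). p t A * generator n le ls l (fresh_in S) A)
      = lam_s ls S * (\<Sum>A\<in>Pow (nodes n). p t A)
        - exit_rate n le ls l S * exp_fresh n p S t
        + (\<Sum>i\<in>nodes n - S. lam_i l i S * exp_fresh n p (S \<union> {i}) t)"
    unfolding generator_fresh_in[OF S] exp_fresh_eq_sum_fresh_in distrib_left right_diff_distrib
      sum.distrib sum_subtractf sum_distrib_left
    by (subst (2) sum.swap) (simp add: mult.left_commute mult.commute)
  also have "\<dots> = lam_s ls S + (\<Sum>i\<in>nodes n - S. lam_i l i S * exp_fresh n p (S \<union> {i}) t)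
      - exit_rate n le ls l S * exp_fresh n p S t"
    using sum_prob_eq_1 t by simp
  finally show ?thesis
    using at_within_open[of t "{0<..}"] t by simp
qed

end

locale gossip_network = forward_solution +
  assumes le_pos: "le > 0"
    and ls_nonneg: "\<forall>j\<in>nodes n. ls j \<ge> 0"
    and l_nonneg: "\<forall>i\<in>nodes n. \<forall>j\<in>nodes n. i \<noteq> j \<longrightarrow> l i j \<ge> 0"
begin

lemma exit_rate_pos:
  assumes "S \<subseteq> nodes n"
  shows "exit_rate n le ls l S > 0"
proof -
  have "lam_s ls S \<ge> 0"
    unfolding lam_s_def using ls_nonneg assms by (intro sum_nonneg) auto
  moreover have "(\<Sum>i\<in>nodes n - S. lam_i l i S) \<ge> 0"
    using lam_i_nonneg[OF l_nonneg assms] by (intro sum_nonneg)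
  ultimately show ?thesis
    unfolding exit_rate_def using le_pos by linarith
qed

lemma exp_fresh_tendsto_from_supersets:
  assumes S: "S \<subseteq> nodes n"
    and L: "\<And>i. i \<in> nodes n - S \<Longrightarrow> (exp_fresh n p (S \<union> {i}) \<longlongrightarrow> L i) at_top"
  shows "(exp_fresh n p S \<longlongrightarrow> (lam_s ls S + (\<Sum>i\<in>nodes n - S. lam_i l i S * L i)) / exit_rate n le ls l S) at_top"
  by (intro linear_ode_tendsto[OF exit_rate_pos[OF S] exp_fresh_has_derivative[OF S]] tendsto_intros L)

lemma exp_fresh_convergent:
  assumes "S \<subseteq> nodes n"
  shows "\<exists>L. (exp_fresh n p S \<longlongrightarrow> L) at_top"
  using assms
proof (induction "card (nodes n - S)" arbitrary: S rule: less_induct)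
  case less
  have "\<exists>L. (exp_fresh n p (S \<union> {i}) \<longlongrightarrow> L) at_top" if "i \<in> nodes n - S" for i
    using that less.prems by (intro less.hyps psubset_card_mono) auto
  then obtain L where "\<And>i. i \<in> nodes n - S \<Longrightarrow> (exp_fresh n p (S \<union> {i}) \<longlongrightarrow> L i) at_top"
    by metis
  with exp_fresh_tendsto_from_supersets[OF less.prems] show ?case
    by blast
qed

end

theorem theorem1:
  fixes n :: nat and le :: real and ls :: "nat \<Rightarrow> real" and l :: "nat \<Rightarrow> nat \<Rightarrow> real"
    and p :: "real \<Rightarrow> nat set \<Rightarrow> real"
  assumes le_pos: "le > 0"
    and ls_nonneg: "\<forall>j\<in>nodes n. ls j \<ge> 0"
    and l_nonneg: "\<forall>i\<in>nodes n. \<forall>j\<in>nodes n. i \<noteq> j \<longrightarrow> l i j \<ge> 0"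
    and init: "initial_distribution n (p 0)"
    and fwd: "forward_eq n le ls l p"
  shows "\<exists>F :: nat set \<Rightarrow> real.
           (\<forall>S. S \<noteq> {} \<and> S \<subseteq> nodes n \<longrightarrow> (exp_fresh n p S \<longlongrightarrow> F S) at_top)
         \<and> (\<forall>S. S \<noteq> {} \<and> S \<subseteq> nodes n \<longrightarrow>
              F S = (lam_s ls S + (\<Sum>i\<in>upd_neighbors n l S. lam_i l i S * F (S \<union> {i})))
                    / (le + lam_s ls S + (\<Sum>i\<in>upd_neighbors n l S. lam_i l i S)))"
proof -
  interpret gossip_network n le ls l p
    using assms by unfold_locales
  define F where "F S = Lim at_top (exp_fresh n p S)" for S
  have F: "(exp_fresh n p S \<longlongrightarrow> F S) at_top" if "S \<subseteq> nodes n" for S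
    using exp_fresh_convergent[OF that] unfolding F_def by (metis tendsto_Lim trivial_limit_at_top_linorder)
  have fixed_point: "F S = (lam_s ls S + (\<Sum>i\<in>nodes n - S. lam_i l i S * F (S \<union> {i}))) / exit_rate n le ls l S"
    if "S \<subseteq> nodes n" for S
    using that by (intro tendsto_unique[OF _ F exp_fresh_tendsto_from_supersets] F) auto
  have "F S = (lam_s ls S + (\<Sum>i\<in>upd_neighbors n l S. lam_i l i S * F (S \<union> {i})))
              / (le + lam_s ls S + (\<Sum>i\<in>upd_neighbors n l S. lam_i l i S))"
    if "S \<subseteq> nodes n" for S
    using fixed_point[OF that] sum_lam_i_upd_neighbors[OF l_nonneg that, of "\<lambda>_. 1"]
      sum_lam_i_upd_neighbors[OF l_nonneg that, of "\<lambda>i. F (S \<union> {i})"]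
    by (simp add: exit_rate_def)
  with F show ?thesis
    by blast
qed

end
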